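(* Let $n\ge3$ and let $C_n=X(\mathbb{Z}_n,\{\pm1\})$ be the cycle graph on $n$ vertices. (i) If $n$ is odd, then $C_n$ does not admit perfect state transfer between distinct vertex type states. (ii) If $n=2l$ is even, then $C_n$ admits perfect state transfer from $d^*e_x$ to $d^*e_{x+l}$ (for every vertex $x$), and the minimum time at which it occurs is $l$.
   Context: For a graph with symmetric arc set $\mathcal{A}$ ($t((x,y))=y$, $(x,y)^{-1}=(y,x)$): boundary matrix $d_{x,a}=\frac{1}{\sqrt{\deg x}}\delta_{x,t(a)}$, shift matrix $R_{a,b}=\delta_{a,b^{-1}}$, Grover time evolution matrix $U=R(2d^*d-I_{\mathcal{A}})$; $e_x$ is the standard unit vector at vertex $x$ and $d^*e_x$ is a vertex type state. Perfect state transfer from a state $\Phi$ to a distinct state $\Psi$ at time $\tau\in\mathbb{Z}_{\ge1}$ means $U^\tau\Phi=\gamma\Psi$ for some $|\gamma|=1$. $X(\mathbb{Z}_n,S)$ denotes the circulant graph with vertex set $\mathbb{Z}_n$ and edges $\{x,y\}$ with $y-x\in S$. *)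

theory Defs
  imports Complex_Main
begin

(* Vectors on arcs: ('v \<times> 'v) \<Rightarrow> complex (zero off the arc set A);
   vectors on vertices: 'v \<Rightarrow> complex. Arc a = (x,y) has terminus t(a) = snd a,
   inverse a^{-1} = (snd a, fst a). *)

definition deg :: "('v \<times> 'v) set \<Rightarrow> 'v \<Rightarrow> nat" where
  "deg A x = card {a \<in> A. snd a = x}"

definition dmat :: "('v \<times> 'v) set \<Rightarrow> 'v \<Rightarrow> ('v \<times> 'v) \<Rightarrow> complex" where
  "dmat A x a = (if a \<in> A \<and> snd a = x then complex_of_real (1 / sqrt (real (deg A x))) else 0)"

definition d_op :: "('v \<times> 'v) set \<Rightarrow> (('v \<times> 'v) \<Rightarrow> complex) \<Rightarrow> 'v \<Rightarrow> complex" where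
  "d_op A \<psi> x = (\<Sum>a\<in>A. dmat A x a * \<psi> a)"

definition dstar_op :: "('v \<times> 'v) set \<Rightarrow> 'v set \<Rightarrow> ('v \<Rightarrow> complex) \<Rightarrow> ('v \<times> 'v) \<Rightarrow> complex" where
  "dstar_op A V \<phi> a = (\<Sum>x\<in>V. cnj (dmat A x a) * \<phi> x)"

definition R_op :: "('v \<times> 'v) set \<Rightarrow> (('v \<times> 'v) \<Rightarrow> complex) \<Rightarrow> ('v \<times> 'v) \<Rightarrow> complex" where
  "R_op A \<psi> a = (\<Sum>b\<in>A. (if a \<in> A \<and> a = (snd b, fst b) then 1 else 0) * \<psi> b)"

definition I_op :: "('v \<times> 'v) set \<Rightarrow> (('v \<times> 'v) \<Rightarrow> complex) \<Rightarrow> ('v \<times> 'v) \<Rightarrow> complex" where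
  "I_op A \<psi> a = (if a \<in> A then \<psi> a else 0)"

definition grover_U :: "('v \<times> 'v) set \<Rightarrow> 'v set \<Rightarrow> (('v \<times> 'v) \<Rightarrow> complex) \<Rightarrow> ('v \<times> 'v) \<Rightarrow> complex" where
  "grover_U A V \<psi> = R_op A (\<lambda>a. 2 * dstar_op A V (d_op A \<psi>) a - I_op A \<psi> a)"

definition unit_vec :: "'v \<Rightarrow> 'v \<Rightarrow> complex" where
  "unit_vec x = (\<lambda>y. if y = x then 1 else 0)"

definition vertex_state :: "('v \<times> 'v) set \<Rightarrow> 'v set \<Rightarrow> 'v \<Rightarrow> ('v \<times> 'v) \<Rightarrow> complex" where
  "vertex_state A V x = dstar_op A V (unit_vec x)"

definition pst :: "('v \<times> 'v) set \<Rightarrow> 'v set \<Rightarrow> (('v \<times> 'v) \<Rightarrow> complex) \<Rightarrow> (('v \<times> 'v) \<Rightarrow> complex) \<Rightarrow> nat \<Rightarrow> bool" where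
  "pst A V \<Phi> \<Psi> \<tau> \<longleftrightarrow> \<tau> \<ge> 1 \<and> \<Phi> \<noteq> \<Psi> \<and>
     (\<exists>\<gamma>. cmod \<gamma> = 1 \<and> (grover_U A V ^^ \<tau>) \<Phi> = (\<lambda>a. \<gamma> * \<Psi> a))"

definition circ_vertices :: "int \<Rightarrow> int set" where
  "circ_vertices n = {0..<n}"

definition circ_arcs :: "int \<Rightarrow> int set \<Rightarrow> (int \<times> int) set" where
  "circ_arcs n S = {(x, y). x \<in> {0..<n} \<and> y \<in> {0..<n} \<and> (\<exists>s\<in>S. (y - x) mod n = s mod n)}"

end

theory Submission
  imports Defs "HOL-Number_Theory.Cong"
begin

(* On the cycle every vertex has degree 2, and at such a vertex the Grover coin 2 d^* d - I
   swaps the two arcs: the walk transmits amplitude around the cycle without reflection.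
   Hence d^* e_x splits into two pulses travelling in opposite directions, which after t steps
   sit on the arcs ending at x + t and x - t. Perfect state transfer to d^* e_y at time t thus
   means x + t = y = x - t (mod n). For odd n this forces x = y; for n = 2l and y = x + l it
   means t = l (mod n), so it first happens at t = l. *)

lemma R_op_apply:
  assumes "finite A"
  shows "R_op A \<psi> a = (if a \<in> A \<and> (snd a, fst a) \<in> A then \<psi> (snd a, fst a) else 0)"
proof -
  have "R_op A \<psi> a = (\<Sum>b\<in>A. if b = (snd a, fst a) then (if a \<in> A then \<psi> b else 0) else 0)"
    unfolding R_op_def by (intro sum.cong) auto
  then show ?thesis
    using assms by (simp add: sum.delta)
qed

lemma d_op_apply:
  assumes "finite A"
  shows "d_op A \<psi> x = of_real (1 / sqrt (deg A x)) * (\<Sum>a\<in>{a\<in>A. snd a = x}. \<psi> a)"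
proof -
  have "d_op A \<psi> x = (\<Sum>a\<in>A. if snd a = x then of_real (1 / sqrt (deg A x)) * \<psi> a else 0)"
    unfolding d_op_def dmat_def by (intro sum.cong) auto
  also have "\<dots> = (\<Sum>a\<in>{a\<in>A. snd a = x}. of_real (1 / sqrt (deg A x)) * \<psi> a)"
    by (simp only: sum.inter_filter[OF assms])
  finally show ?thesis
    by (simp only: sum_distrib_left)
qed

lemma dstar_op_apply:
  assumes "finite V"
  shows "dstar_op A V \<phi> a =
    (if a \<in> A \<and> snd a \<in> V then of_real (1 / sqrt (deg A (snd a))) * \<phi> (snd a) else 0)"
proof -
  have "dstar_op A V \<phi> a =
      (\<Sum>x\<in>V. if snd a = x then (if a \<in> A then of_real (1 / sqrt (deg A x)) * \<phi> x else 0) else 0)"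
    unfolding dstar_op_def dmat_def by (intro sum.cong) auto
  then show ?thesis
    using assms by simp
qed

lemma grover_U_outside: "a \<notin> A \<Longrightarrow> grover_U A V \<psi> a = 0"
  unfolding grover_U_def R_op_def by simp

lemma grover_U_apply:
  assumes "finite A" "finite V" and "(u, v) \<in> A" "(v, u) \<in> A" "u \<in> V"
  shows "grover_U A V \<psi> (u, v) =
    of_real (2 / deg A u) * (\<Sum>a\<in>{a\<in>A. snd a = u}. \<psi> a) - \<psi> (v, u)"
proof -
  have "of_real (1 / sqrt (deg A u)) * of_real (1 / sqrt (deg A u)) = (of_real (1 / deg A u) :: complex)"
    by (simp flip: of_real_mult)
  then show ?thesis
    using assms
    by (simp add: grover_U_def R_op_apply dstar_op_apply d_op_apply I_op_def)
qed

lemma grover_U_degree_two: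
  assumes "finite A" "finite V" "u \<in> V" "(u, v) \<in> A"
    and in_arcs: "{a\<in>A. snd a = u} = {(v, u), (w, u)}" and "v \<noteq> w"
  shows "grover_U A V \<psi> (u, v) = \<psi> (w, u)"
proof -
  have "deg A u = 2"
    unfolding deg_def in_arcs using \<open>v \<noteq> w\<close> by simp
  moreover have "(v, u) \<in> A"
    using in_arcs by blast
  ultimately show ?thesis
    using assms by (simp add: grover_U_apply)
qed

lemma cong_affine:
  "[a = b] (mod n) \<Longrightarrow> [x + a * t = x + b * t] (mod n)"
  by (intro cong_add cong_mult cong_refl)

lemma eq_mod_iff_cong_int:
  fixes u z n :: int
  assumes "u \<in> {0..<n}"
  shows "u = z mod n \<longleftrightarrow> [u = z] (mod n)"
  using assms by (simp add: cong_def)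

lemma cong_diff_swap_int:
  fixes x u c n :: int
  shows "[x - u = c] (mod n) \<longleftrightarrow> [u = x - c] (mod n)"
proof -
  have "x - u - c = - (u - (x - c))"
    by simp
  then show ?thesis
    unfolding cong_iff_dvd_diff by (simp only: dvd_minus_iff)
qed

lemma cong_reflect_int:
  fixes u v n :: int
  shows "[u - (2 * u - v) mod n = v - u] (mod n)"
  unfolding cong_iff_dvd_diff mod_eq_dvd_iff[symmetric]
  by (simp add: mod_diff_right_eq algebra_simps)

abbreviation cycle_arcs :: "int \<Rightarrow> (int \<times> int) set" where
  "cycle_arcs n \<equiv> circ_arcs n {1, -1}"

abbreviation cycle_walk :: "int \<Rightarrow> ((int \<times> int) \<Rightarrow> complex) \<Rightarrow> (int \<times> int) \<Rightarrow> complex" where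
  "cycle_walk n \<equiv> grover_U (cycle_arcs n) (circ_vertices n)"

abbreviation cycle_vertex_state :: "int \<Rightarrow> int \<Rightarrow> (int \<times> int) \<Rightarrow> complex" where
  "cycle_vertex_state n \<equiv> vertex_state (cycle_arcs n) (circ_vertices n)"

lemma mem_cycle_arcs_iff:
  "(u, v) \<in> cycle_arcs n \<longleftrightarrow>
    u \<in> {0..<n} \<and> v \<in> {0..<n} \<and> ([v - u = 1] (mod n) \<or> [v - u = -1] (mod n))"
  unfolding circ_arcs_def cong_def by auto

lemma finite_cycle_arcs: "finite (cycle_arcs n)"
proof (rule finite_subset)
  show "cycle_arcs n \<subseteq> {0..<n} \<times> {0..<n}"
    unfolding circ_arcs_def by auto
qed simp

lemma cycle_arcs_sym: "(u, v) \<in> cycle_arcs n \<Longrightarrow> (v, u) \<in> cycle_arcs n"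
  unfolding mem_cycle_arcs_iff
  using cong_minus_minus_iff[of "v - u" 1 n] cong_minus_minus_iff[of "v - u" "-1" n]
  by auto

lemma cycle_neighbours_distinct:
  fixes n x :: int
  assumes "n \<ge> 3"
  shows "(x - 1) mod n \<noteq> (x + 1) mod n"
proof
  assume "(x - 1) mod n = (x + 1) mod n"
  then have "n dvd 2"
    using mod_eq_dvd_iff[of "x - 1" n "x + 1"] by simp
  with assms show False
    using zdvd_imp_le[of n 2] by simp
qed

lemma cycle_in_arcs:
  fixes n x :: int
  assumes "x \<in> {0..<n}"
  shows "{a \<in> cycle_arcs n. snd a = x} = {((x - 1) mod n, x), ((x + 1) mod n, x)}"
proof -
  have in_arc: "(u, x) \<in> cycle_arcs n \<longleftrightarrow> u = (x - 1) mod n \<or> u = (x + 1) mod n" for u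
  proof (cases "u \<in> {0..<n}")
    case True
    have "(u, x) \<in> cycle_arcs n \<longleftrightarrow> [x - u = 1] (mod n) \<or> [x - u = -1] (mod n)"
      using True assms by (simp add: mem_cycle_arcs_iff)
    also have "\<dots> \<longleftrightarrow> [u = x - 1] (mod n) \<or> [u = x - -1] (mod n)"
      by (simp only: cong_diff_swap_int)
    also have "\<dots> \<longleftrightarrow> u = (x - 1) mod n \<or> u = (x + 1) mod n"
      using True by (simp add: eq_mod_iff_cong_int)
    finally show ?thesis .
  next
    case False
    then show ?thesis
      using assms by (auto simp: mem_cycle_arcs_iff)
  qed
  show ?thesis
  proof (rule set_eqI)
    fix a :: "int \<times> int"
    show "a \<in> {a \<in> cycle_arcs n. snd a = x} \<longleftrightarrow> a \<in> {((x - 1) mod n, x), ((x + 1) mod n, x)}"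
      using in_arc[of "fst a"]
      by (cases a)
        (simp only: mem_Collect_eq insert_iff empty_iff prod.inject fst_conv snd_conv, blast)
  qed
qed

lemma cycle_deg:
  fixes n x :: int
  assumes "n \<ge> 3" "x \<in> {0..<n}"
  shows "deg (cycle_arcs n) x = 2"
  unfolding deg_def cycle_in_arcs[OF assms(2)]
  using cycle_neighbours_distinct[OF assms(1)] by simp

(* (2 u - v) mod n is the neighbour of u other than v: nothing is reflected. *)
lemma cycle_walk_apply:
  fixes n u v :: int
  assumes "n \<ge> 3" and uv: "(u, v) \<in> cycle_arcs n"
  shows "cycle_walk n \<psi> (u, v) = \<psi> ((2 * u - v) mod n, u)"
proof -
  have u: "u \<in> {0..<n}"
    using uv by (simp add: mem_cycle_arcs_iff)
  have "(v, u) \<in> {a \<in> cycle_arcs n. snd a = u}"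
    using cycle_arcs_sym[OF uv] by simp
  then have "v = (u - 1) mod n \<or> v = (u - -1) mod n"
    unfolding cycle_in_arcs[OF u] by simp
  then obtain s where s: "s = 1 \<or> s = -1" and v: "v = (u - s) mod n"
    by blast
  have w: "(2 * u - v) mod n = (u + s) mod n"
    unfolding v mod_diff_right_eq by (simp add: algebra_simps)
  have in_arcs: "{a \<in> cycle_arcs n. snd a = u} = {(v, u), ((2 * u - v) mod n, u)}"
    using s unfolding cycle_in_arcs[OF u] w unfolding v
    by (elim disjE) (simp_all add: insert_commute)
  have "v \<noteq> (2 * u - v) mod n"
    using s cycle_neighbours_distinct[OF assms(1), of u] unfolding w unfolding v
    by (elim disjE) simp_all
  moreover have "finite (circ_vertices n)" "u \<in> circ_vertices n"
    using u by (simp_all add: circ_vertices_def)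
  ultimately show ?thesis
    using grover_U_degree_two[OF finite_cycle_arcs _ _ uv in_arcs] by blast
qed

lemma cycle_vertex_state_apply:
  fixes n x :: int
  assumes "n \<ge> 3"
  shows "cycle_vertex_state n x a =
    (if a \<in> cycle_arcs n \<and> snd a = x then of_real (1 / sqrt 2) else 0)"
proof (cases "a \<in> cycle_arcs n")
  case True
  then have "snd a \<in> {0..<n}"
    by (cases a) (simp add: mem_cycle_arcs_iff)
  then show ?thesis
    using True cycle_deg[OF assms]
    by (simp add: vertex_state_def dstar_op_apply unit_vec_def circ_vertices_def)
next
  case False
  then show ?thesis
    by (simp add: vertex_state_def dstar_op_apply circ_vertices_def)
qed

(* The arc (u, v) points in direction v - u, which is 1 or -1 modulo n; the pulse travelling
   in that direction has reached x + (v - u) t after t steps. *)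
definition cycle_pulses :: "int \<Rightarrow> int \<Rightarrow> nat \<Rightarrow> (int \<times> int) \<Rightarrow> complex" where
  "cycle_pulses n x t a =
    (if a \<in> cycle_arcs n \<and> [snd a = x + (snd a - fst a) * int t] (mod n)
     then of_real (1 / sqrt 2) else 0)"

lemma cycle_arcs_prev:
  assumes "(u, v) \<in> cycle_arcs n"
  shows "((2 * u - v) mod n, u) \<in> cycle_arcs n"
proof -
  have "[u - (2 * u - v) mod n = 1] (mod n) \<or> [u - (2 * u - v) mod n = -1] (mod n)"
    using assms cong_reflect_int[of u v n] unfolding mem_cycle_arcs_iff by (meson cong_trans)
  moreover have "(2 * u - v) mod n \<in> {0..<n}" "u \<in> {0..<n}"
    using assms unfolding mem_cycle_arcs_iff by auto
  ultimately show ?thesis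
    unfolding mem_cycle_arcs_iff by blast
qed

lemma cycle_walk_pulses:
  fixes n x :: int
  assumes "n \<ge> 3"
  shows "cycle_walk n (cycle_pulses n x t) = cycle_pulses n x (Suc t)"
proof
  fix a :: "int \<times> int"
  obtain u v where a: "a = (u, v)"
    by fastforce
  show "cycle_walk n (cycle_pulses n x t) a = cycle_pulses n x (Suc t) a"
  proof (cases "a \<in> cycle_arcs n")
    case True
    define w where "w = (2 * u - v) mod n"
    have "[x + (u - w) * int t = x + (v - u) * int t] (mod n)"
      unfolding w_def using cong_reflect_int by (rule cong_affine)
    then have "[u = x + (u - w) * int t] (mod n) \<longleftrightarrow> [u = x + (v - u) * int t] (mod n)"
      by (meson cong_sym cong_trans)
    also have "\<dots> \<longleftrightarrow> [u + (v - u) = x + (v - u) * int t + (v - u)] (mod n)"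
      by (rule cong_add_rcancel[symmetric])
    also have "\<dots> \<longleftrightarrow> [v = x + (v - u) * int (Suc t)] (mod n)"
      by (simp add: algebra_simps)
    finally show ?thesis
      using True cycle_arcs_prev[of u v n] unfolding a
      by (simp add: cycle_walk_apply[OF assms] cycle_pulses_def w_def)
  next
    case False
    then show ?thesis
      by (simp add: grover_U_outside cycle_pulses_def)
  qed
qed

lemma cycle_walk_vertex_state:
  fixes n x :: int
  assumes "n \<ge> 3" "x \<in> {0..<n}"
  shows "(cycle_walk n ^^ t) (cycle_vertex_state n x) = cycle_pulses n x t"
proof (induction t)
  case 0
  show ?case
  proof
    fix a :: "int \<times> int"
    have "[snd a = x] (mod n) \<longleftrightarrow> snd a = x" if "a \<in> cycle_arcs n"
      using that assms(2) cong_less_imp_eq_int[of "snd a" n x]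
      by (cases a) (auto simp: mem_cycle_arcs_iff)
    then show "(cycle_walk n ^^ 0) (cycle_vertex_state n x) a = cycle_pulses n x 0 a"
      by (simp add: cycle_vertex_state_apply[OF assms(1)] cycle_pulses_def)
  qed
next
  case (Suc t)
  then show ?case
    using cycle_walk_pulses[OF assms(1)] by simp
qed

lemma cycle_vertex_state_inj:
  fixes n x y :: int
  assumes "n \<ge> 3" "x \<in> {0..<n}" and "cycle_vertex_state n x = cycle_vertex_state n y"
  shows "x = y"
proof -
  have "((x - 1) mod n, x) \<in> cycle_arcs n"
    using cycle_in_arcs[OF assms(2)] by blast
  then show ?thesis
    using fun_cong[OF assms(3), of "((x - 1) mod n, x)"]
    by (simp add: cycle_vertex_state_apply[OF assms(1)] split: if_splits)
qed

lemma cycle_transfer_congruences: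
  fixes n x y :: int and \<gamma> :: complex
  assumes "n \<ge> 3" "x \<in> {0..<n}" "y \<in> {0..<n}" "\<gamma> \<noteq> 0"
    and transfer: "(cycle_walk n ^^ t) (cycle_vertex_state n x) = (\<lambda>a. \<gamma> * cycle_vertex_state n y a)"
  shows "[x + int t = y] (mod n)" "[x - int t = y] (mod n)"
proof -
  have "[y = x + s * int t] (mod n)" if s: "s = 1 \<or> s = -1" for s
  proof -
    define a where "a = ((y - s) mod n, y)"
    have "a \<in> {a \<in> cycle_arcs n. snd a = y}"
      unfolding a_def cycle_in_arcs[OF assms(3)] using s by (elim disjE) simp_all
    then have arc: "a \<in> cycle_arcs n"
      by simp
    have "[snd a - fst a = s] (mod n)"
      unfolding a_def cong_iff_dvd_diff mod_eq_dvd_iff[symmetric] by (simp add: mod_diff_right_eq)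
    then have direction: "[x + (snd a - fst a) * int t = x + s * int t] (mod n)"
      by (rule cong_affine)
    have "cycle_pulses n x t a \<noteq> 0"
      using fun_cong[OF transfer, of a] arc assms(1,4)
      by (simp add: cycle_walk_vertex_state[OF assms(1,2)] cycle_vertex_state_apply a_def)
    then have "[snd a = x + (snd a - fst a) * int t] (mod n)"
      unfolding cycle_pulses_def by (simp split: if_split_asm)
    from cong_trans[OF this direction] show ?thesis
      by (simp add: a_def)
  qed
  from this[of 1] this[of "-1"] show "[x + int t = y] (mod n)" "[x - int t = y] (mod n)"
    by (simp_all add: cong_sym_eq)
qed

lemma cycle_transfer:
  fixes n x y :: int
  assumes "n \<ge> 3" "x \<in> {0..<n}" "y \<in> {0..<n}"
    and "[x + int t = y] (mod n)" "[x - int t = y] (mod n)"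
  shows "(cycle_walk n ^^ t) (cycle_vertex_state n x) = cycle_vertex_state n y"
proof
  fix a :: "int \<times> int"
  obtain u v where a: "a = (u, v)"
    by fastforce
  have lit: "[v = x + (v - u) * int t] (mod n) \<longleftrightarrow> v = y" if arc: "(u, v) \<in> cycle_arcs n"
  proof -
    obtain s where s: "s = 1 \<or> s = -1" "[v - u = s] (mod n)"
      using arc unfolding mem_cycle_arcs_iff by blast
    have "[x + (v - u) * int t = x + s * int t] (mod n)"
      using s(2) by (rule cong_affine)
    moreover have "[x + s * int t = y] (mod n)"
      using s(1) assms(4,5) by (elim disjE) simp_all
    ultimately have "[x + (v - u) * int t = y] (mod n)"
      by (rule cong_trans)
    then have "[v = x + (v - u) * int t] (mod n) \<longleftrightarrow> [v = y] (mod n)"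
      by (meson cong_sym cong_trans)
    moreover have "v \<in> {0..<n}"
      using arc by (simp add: mem_cycle_arcs_iff)
    ultimately show ?thesis
      using assms(3) cong_less_imp_eq_int[of v n y] by (auto simp del: cong_mod_left cong_mod_right)
  qed
  show "(cycle_walk n ^^ t) (cycle_vertex_state n x) a = cycle_vertex_state n y a"
    unfolding a cycle_walk_vertex_state[OF assms(1,2)]
    by (cases "(u, v) \<in> cycle_arcs n")
      (simp_all add: lit cycle_pulses_def cycle_vertex_state_apply[OF assms(1)])
qed

lemma cycle_pst_congruences:
  fixes n x y :: int
  assumes "n \<ge> 3" "x \<in> circ_vertices n" "y \<in> circ_vertices n"
    and "pst (cycle_arcs n) (circ_vertices n) (cycle_vertex_state n x) (cycle_vertex_state n y) \<tau>"
  shows "[x + int \<tau> = y] (mod n)" "[x - int \<tau> = y] (mod n)"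
proof -
  obtain \<gamma> where "cmod \<gamma> = 1"
    and transfer: "(cycle_walk n ^^ \<tau>) (cycle_vertex_state n x) = (\<lambda>a. \<gamma> * cycle_vertex_state n y a)"
    using assms(4) unfolding pst_def by blast
  then have "\<gamma> \<noteq> 0"
    by auto
  moreover have "x \<in> {0..<n}" "y \<in> {0..<n}"
    using assms(2,3) by (simp_all add: circ_vertices_def)
  ultimately show "[x + int \<tau> = y] (mod n)" "[x - int \<tau> = y] (mod n)"
    using cycle_transfer_congruences[OF assms(1) _ _ _ transfer] by blast+
qed

lemma cycle_odd_no_pst:
  fixes n x y :: int
  assumes "n \<ge> 3" "odd n" "x \<in> circ_vertices n" "y \<in> circ_vertices n"
  shows "\<not> pst (cycle_arcs n) (circ_vertices n) (cycle_vertex_state n x) (cycle_vertex_state n y) \<tau>"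
proof
  assume pst: "pst (cycle_arcs n) (circ_vertices n) (cycle_vertex_state n x) (cycle_vertex_state n y) \<tau>"
  have "[(x + int \<tau>) + (x - int \<tau>) = y + y] (mod n)"
    using cycle_pst_congruences[OF assms(1,3,4) pst] by (rule cong_add)
  moreover have "(x + int \<tau>) + (x - int \<tau>) = 2 * x" "y + y = 2 * y"
    by simp_all
  ultimately have "[2 * x = 2 * y] (mod n)"
    by simp
  moreover have "coprime 2 n"
    using assms(2) by simp
  ultimately have "[x = y] (mod n)"
    by (simp only: cong_mult_lcancel)
  then have "x = y"
    using assms(3,4) cong_less_imp_eq_int[of x n y] unfolding circ_vertices_def by simp
  with pst show False
    unfolding pst_def by simp
qed

lemma cycle_antipodal_congruences:
  fixes n l x :: int
  assumes "n = 2 * l" "l \<ge> 0"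
  shows "[x + int (nat l) = (x + l) mod n] (mod n)" "[x - int (nat l) = (x + l) mod n] (mod n)"
  unfolding cong_mod_right unfolding cong_iff_dvd_diff using assms by simp_all

lemma cycle_even_pst:
  fixes n l x :: int
  assumes "n \<ge> 3" "n = 2 * l" "x \<in> circ_vertices n"
  shows "pst (cycle_arcs n) (circ_vertices n) (cycle_vertex_state n x)
    (cycle_vertex_state n ((x + l) mod n)) (nat l)"
proof -
  define y where "y = (x + l) mod n"
  have x: "x \<in> {0..<n}" and y: "y \<in> {0..<n}"
    using assms unfolding y_def circ_vertices_def by auto
  have "x \<noteq> y"
  proof
    assume "x = y"
    then have "n dvd l"
      using cycle_antipodal_congruences(1)[OF assms(2), of x] assms
      by (simp add: y_def cong_iff_dvd_diff)
    then show False
      using assms zdvd_imp_le[of n l] by simp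
  qed
  then have "cycle_vertex_state n x \<noteq> cycle_vertex_state n y"
    using cycle_vertex_state_inj[OF assms(1) x] by blast
  moreover have "(cycle_walk n ^^ nat l) (cycle_vertex_state n x) = cycle_vertex_state n y"
    using cycle_antipodal_congruences[OF assms(2), of x] assms(1,2)
    by (intro cycle_transfer[OF assms(1) x y]) (simp_all add: y_def)
  ultimately show ?thesis
    using assms unfolding pst_def y_def[symmetric] by (intro conjI exI[of _ 1]) simp_all
qed

lemma cycle_even_pst_time:
  fixes n l x :: int
  assumes "n \<ge> 3" "n = 2 * l" "x \<in> circ_vertices n"
    and pst: "pst (cycle_arcs n) (circ_vertices n) (cycle_vertex_state n x)
      (cycle_vertex_state n ((x + l) mod n)) \<tau>"
  shows "\<tau> \<ge> nat l"
proof -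
  have "(x + l) mod n \<in> circ_vertices n"
    using assms(1) by (simp add: circ_vertices_def)
  then have "[x - int \<tau> = (x + l) mod n] (mod n)"
    using cycle_pst_congruences(2)[OF assms(1,3) _ pst] by blast
  then have "[x + l = x - int \<tau>] (mod n)"
    using assms(1,2) by (simp add: cong_sym_eq)
  then have "n dvd l + int \<tau>"
    unfolding cong_iff_dvd_diff by simp
  moreover have "\<tau> \<ge> 1"
    using pst unfolding pst_def by simp
  ultimately show ?thesis
    using assms(1,2) zdvd_imp_le[of n "l + int \<tau>"] by simp
qed

theorem theorem5p1:
  fixes n :: int
  assumes "n \<ge> 3"
  shows "(odd n \<longrightarrow>
            \<not> (\<exists>x\<in>circ_vertices n. \<exists>y\<in>circ_vertices n. \<exists>\<tau>.
                  pst (circ_arcs n {1, -1}) (circ_vertices n)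
                      (vertex_state (circ_arcs n {1, -1}) (circ_vertices n) x)
                      (vertex_state (circ_arcs n {1, -1}) (circ_vertices n) y) \<tau>))
       \<and> (\<forall>l. n = 2 * l \<longrightarrow>
            (\<forall>x\<in>circ_vertices n.
               pst (circ_arcs n {1, -1}) (circ_vertices n)
                   (vertex_state (circ_arcs n {1, -1}) (circ_vertices n) x)
                   (vertex_state (circ_arcs n {1, -1}) (circ_vertices n) ((x + l) mod n)) (nat l)
             \<and> (\<forall>\<tau>. pst (circ_arcs n {1, -1}) (circ_vertices n)
                   (vertex_state (circ_arcs n {1, -1}) (circ_vertices n) x)
                   (vertex_state (circ_arcs n {1, -1}) (circ_vertices n) ((x + l) mod n)) \<tau>
                   \<longrightarrow> \<tau> \<ge> nat l)))"
proof (intro conjI impI allI ballI notI)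
  assume "odd n" and "\<exists>x\<in>circ_vertices n. \<exists>y\<in>circ_vertices n. \<exists>\<tau>.
    pst (cycle_arcs n) (circ_vertices n) (cycle_vertex_state n x) (cycle_vertex_state n y) \<tau>"
  then show False
    using cycle_odd_no_pst[OF assms] by blast
next
  fix l x
  assume "n = 2 * l" and "x \<in> circ_vertices n"
  then show "pst (cycle_arcs n) (circ_vertices n) (cycle_vertex_state n x)
      (cycle_vertex_state n ((x + l) mod n)) (nat l)"
    by (rule cycle_even_pst[OF assms])
  show "\<tau> \<ge> nat l"
    if "pst (cycle_arcs n) (circ_vertices n) (cycle_vertex_state n x)
      (cycle_vertex_state n ((x + l) mod n)) \<tau>" for \<tau>
    using cycle_even_pst_time[OF assms \<open>n = 2 * l\<close> \<open>x \<in> circ_vertices n\<close> that] .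
qed

end
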